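(* Fix $n\ge0$. On the class of tilting subcategories of $\mathcal C$ of projective dimension $n$, the relation $\mathcal T_1\le\mathcal T_2$ defined by $\mathcal T_1\subseteq\mathcal T_2^{\perp}$ is a partial order.
   Context: $(\mathcal C,\mathbb E,\mathfrak s)$ is an extriangulated category in the sense of Nakaoka–Palu, Krull–Schmidt, with enough projectives and enough injectives; subcategories are full, additive, closed under isomorphisms. Higher extensions: $\mathbb E^1=\mathbb E$, $\mathbb E^{i+1}(X,Y)=\mathbb E(\Omega^iX,Y)\cong\mathbb E(X,\Sigma^iY)$. $\mathrm{pd}(A)\le n$ iff $\mathbb E^{n+1}(A,-)=0$. $\mathcal S^{\perp}=\{Y:\mathbb E^i(S,Y)=0\ \forall i\ge1,\forall S\in\mathcal S\}$. A subcategory $\mathcal T$ closed under direct summands is a tilting subcategory of projective dimension $n$ if $\mathrm{pd}(T)\le n$ for all $T\in\mathcal T$ and $\mathcal T$ is a generator for $\mathcal T^{\perp}$, i.e. $\mathcal T\subseteq\mathcal T^{\perp}$ and every $Y\in\mathcal T^{\perp}$ admits an $\mathbb E$-triangle $Y'\to T\to Y\dashrightarrow$ with $T\in\mathcal T$, $Y'\in\mathcal T^{\perp}$. *)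

theory Defs
  imports Main
begin

section \<open>Extriangulated categories (Nakaoka--Palu), encoded concretely\<close>

text \<open>A (small-ish) category is given by a set of objects, a set of morphisms
with domain/codomain, composition (Cmp g f = g o f) and identities.  The bifunctor
E(C,A) is given by a set EE of extensions, each extension d lying in
E(EC d, EA d); EAdd/EZer/ENeg give the group structure, Push a d = a_* d,
Pull c d = c^* d.  Real d x y means that the sequence A -x-> B -y-> C belongs
to the equivalence class s(d).\<close>

record ('o,'m,'e) extri_data =
  Ob :: "'o set"
  Mor :: "'m set"
  Dom :: "'m \<Rightarrow> 'o"
  Cod :: "'m \<Rightarrow> 'o"
  Cmp :: "'m \<Rightarrow> 'm \<Rightarrow> 'm"
  Idm :: "'o \<Rightarrow> 'm"
  Add :: "'m \<Rightarrow> 'm \<Rightarrow> 'm"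
  Zer :: "'o \<Rightarrow> 'o \<Rightarrow> 'm"
  Neg :: "'m \<Rightarrow> 'm"
  EE :: "'e set"
  EA :: "'e \<Rightarrow> 'o"
  EC :: "'e \<Rightarrow> 'o"
  EAdd :: "'e \<Rightarrow> 'e \<Rightarrow> 'e"
  EZer :: "'o \<Rightarrow> 'o \<Rightarrow> 'e"
  ENeg :: "'e \<Rightarrow> 'e"
  Push :: "'m \<Rightarrow> 'e \<Rightarrow> 'e"
  Pull :: "'m \<Rightarrow> 'e \<Rightarrow> 'e"
  Real :: "'e \<Rightarrow> 'm \<Rightarrow> 'm \<Rightarrow> bool"

definition hom :: "('o,'m,'e) extri_data \<Rightarrow> 'o \<Rightarrow> 'o \<Rightarrow> 'm set" where
  "hom CC X Y = {f \<in> Mor CC. Dom CC f = X \<and> Cod CC f = Y}"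

definition ext :: "('o,'m,'e) extri_data \<Rightarrow> 'o \<Rightarrow> 'o \<Rightarrow> 'e set" where
  "ext CC C A = {d \<in> EE CC. EC CC d = C \<and> EA CC d = A}"

definition abgroup_on :: "'a set \<Rightarrow> ('a \<Rightarrow> 'a \<Rightarrow> 'a) \<Rightarrow> 'a \<Rightarrow> ('a \<Rightarrow> 'a) \<Rightarrow> bool" where
  "abgroup_on G add z neg \<longleftrightarrow>
     z \<in> G \<and> (\<forall>a\<in>G. \<forall>b\<in>G. add a b \<in> G) \<and> (\<forall>a\<in>G. neg a \<in> G) \<and>
     (\<forall>a\<in>G. \<forall>b\<in>G. \<forall>c\<in>G. add (add a b) c = add a (add b c)) \<and>
     (\<forall>a\<in>G. \<forall>b\<in>G. add a b = add b a) \<and>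
     (\<forall>a\<in>G. add z a = a) \<and> (\<forall>a\<in>G. add (neg a) a = z)"

definition is_category :: "('o,'m,'e) extri_data \<Rightarrow> bool" where
  "is_category CC \<longleftrightarrow>
     (\<forall>f\<in>Mor CC. Dom CC f \<in> Ob CC \<and> Cod CC f \<in> Ob CC) \<and>
     (\<forall>X\<in>Ob CC. Idm CC X \<in> hom CC X X) \<and>
     (\<forall>X Y Z f g. f \<in> hom CC X Y \<longrightarrow> g \<in> hom CC Y Z \<longrightarrow> Cmp CC g f \<in> hom CC X Z) \<and>
     (\<forall>X Y f. f \<in> hom CC X Y \<longrightarrow> Cmp CC (Idm CC Y) f = f \<and> Cmp CC f (Idm CC X) = f) \<and>
     (\<forall>W X Y Z f g h. f \<in> hom CC W X \<longrightarrow> g \<in> hom CC X Y \<longrightarrow> h \<in> hom CC Y Z \<longrightarrow>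
        Cmp CC h (Cmp CC g f) = Cmp CC (Cmp CC h g) f)"

definition preadditive :: "('o,'m,'e) extri_data \<Rightarrow> bool" where
  "preadditive CC \<longleftrightarrow> is_category CC \<and>
     (\<forall>X\<in>Ob CC. \<forall>Y\<in>Ob CC. abgroup_on (hom CC X Y) (Add CC) (Zer CC X Y) (Neg CC)) \<and>
     (\<forall>X Y Z f f' g. f \<in> hom CC X Y \<longrightarrow> f' \<in> hom CC X Y \<longrightarrow> g \<in> hom CC Y Z \<longrightarrow>
        Cmp CC g (Add CC f f') = Add CC (Cmp CC g f) (Cmp CC g f')) \<and>
     (\<forall>X Y Z f g g'. f \<in> hom CC X Y \<longrightarrow> g \<in> hom CC Y Z \<longrightarrow> g' \<in> hom CC Y Z \<longrightarrow>
        Cmp CC (Add CC g g') f = Add CC (Cmp CC g f) (Cmp CC g' f))"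

definition zero_object :: "('o,'m,'e) extri_data \<Rightarrow> 'o \<Rightarrow> bool" where
  "zero_object CC Z \<longleftrightarrow> Z \<in> Ob CC \<and>
     (\<forall>X\<in>Ob CC. (\<exists>!f. f \<in> hom CC Z X) \<and> (\<exists>!f. f \<in> hom CC X Z))"

definition biproduct :: "('o,'m,'e) extri_data \<Rightarrow> 'o \<Rightarrow> 'o \<Rightarrow> 'o \<Rightarrow> 'm \<Rightarrow> 'm \<Rightarrow> 'm \<Rightarrow> 'm \<Rightarrow> bool" where
  "biproduct CC X Y S i1 i2 p1 p2 \<longleftrightarrow> S \<in> Ob CC \<and>
     i1 \<in> hom CC X S \<and> i2 \<in> hom CC Y S \<and> p1 \<in> hom CC S X \<and> p2 \<in> hom CC S Y \<and>
     Cmp CC p1 i1 = Idm CC X \<and> Cmp CC p2 i2 = Idm CC Y \<and>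
     Cmp CC p1 i2 = Zer CC Y X \<and> Cmp CC p2 i1 = Zer CC X Y \<and>
     Add CC (Cmp CC i1 p1) (Cmp CC i2 p2) = Idm CC S"

definition additive :: "('o,'m,'e) extri_data \<Rightarrow> bool" where
  "additive CC \<longleftrightarrow> preadditive CC \<and> (\<exists>Z. zero_object CC Z) \<and>
     (\<forall>X\<in>Ob CC. \<forall>Y\<in>Ob CC. \<exists>S i1 i2 p1 p2. biproduct CC X Y S i1 i2 p1 p2)"

definition is_iso :: "('o,'m,'e) extri_data \<Rightarrow> 'o \<Rightarrow> 'o \<Rightarrow> 'm \<Rightarrow> bool" where
  "is_iso CC X Y f \<longleftrightarrow> f \<in> hom CC X Y \<and>
     (\<exists>g\<in>hom CC Y X. Cmp CC g f = Idm CC X \<and> Cmp CC f g = Idm CC Y)"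

definition ET1 :: "('o,'m,'e) extri_data \<Rightarrow> bool" where
  "ET1 CC \<longleftrightarrow>
     (\<forall>d\<in>EE CC. EA CC d \<in> Ob CC \<and> EC CC d \<in> Ob CC) \<and>
     (\<forall>C\<in>Ob CC. \<forall>A\<in>Ob CC. abgroup_on (ext CC C A) (EAdd CC) (EZer CC C A) (ENeg CC)) \<and>
     (\<forall>A A' C a d. a \<in> hom CC A A' \<longrightarrow> d \<in> ext CC C A \<longrightarrow> Push CC a d \<in> ext CC C A') \<and>
     (\<forall>A C C' c d. c \<in> hom CC C' C \<longrightarrow> d \<in> ext CC C A \<longrightarrow> Pull CC c d \<in> ext CC C' A) \<and>
     (\<forall>A C d. d \<in> ext CC C A \<longrightarrow> Push CC (Idm CC A) d = d \<and> Pull CC (Idm CC C) d = d) \<and>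
     (\<forall>A A' A'' C a a' d. a \<in> hom CC A A' \<longrightarrow> a' \<in> hom CC A' A'' \<longrightarrow> d \<in> ext CC C A \<longrightarrow>
        Push CC (Cmp CC a' a) d = Push CC a' (Push CC a d)) \<and>
     (\<forall>A C C' C'' c c' d. c \<in> hom CC C' C \<longrightarrow> c' \<in> hom CC C'' C' \<longrightarrow> d \<in> ext CC C A \<longrightarrow>
        Pull CC (Cmp CC c c') d = Pull CC c' (Pull CC c d)) \<and>
     (\<forall>A A' C C' a c d. a \<in> hom CC A A' \<longrightarrow> c \<in> hom CC C' C \<longrightarrow> d \<in> ext CC C A \<longrightarrow>
        Push CC a (Pull CC c d) = Pull CC c (Push CC a d)) \<and>
     (\<forall>A A' C a d d'. a \<in> hom CC A A' \<longrightarrow> d \<in> ext CC C A \<longrightarrow> d' \<in> ext CC C A \<longrightarrow>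
        Push CC a (EAdd CC d d') = EAdd CC (Push CC a d) (Push CC a d')) \<and>
     (\<forall>A A' C a a' d. a \<in> hom CC A A' \<longrightarrow> a' \<in> hom CC A A' \<longrightarrow> d \<in> ext CC C A \<longrightarrow>
        Push CC (Add CC a a') d = EAdd CC (Push CC a d) (Push CC a' d)) \<and>
     (\<forall>A C C' c d d'. c \<in> hom CC C' C \<longrightarrow> d \<in> ext CC C A \<longrightarrow> d' \<in> ext CC C A \<longrightarrow>
        Pull CC c (EAdd CC d d') = EAdd CC (Pull CC c d) (Pull CC c d')) \<and>
     (\<forall>A C C' c c' d. c \<in> hom CC C' C \<longrightarrow> c' \<in> hom CC C' C \<longrightarrow> d \<in> ext CC C A \<longrightarrow>
        Pull CC (Add CC c c') d = EAdd CC (Pull CC c d) (Pull CC c' d))"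

definition equiv_seq :: "('o,'m,'e) extri_data \<Rightarrow> 'o \<Rightarrow> 'o \<Rightarrow> 'm \<Rightarrow> 'm \<Rightarrow> 'm \<Rightarrow> 'm \<Rightarrow> bool" where
  "equiv_seq CC A C x y x' y' \<longleftrightarrow> (\<exists>B B' b.
     x \<in> hom CC A B \<and> y \<in> hom CC B C \<and> x' \<in> hom CC A B' \<and> y' \<in> hom CC B' C \<and>
     is_iso CC B B' b \<and> Cmp CC b x = x' \<and> Cmp CC y' b = y)"

definition ext_mor :: "('o,'m,'e) extri_data \<Rightarrow> 'e \<Rightarrow> 'e \<Rightarrow> 'm \<Rightarrow> 'm \<Rightarrow> bool" where
  "ext_mor CC d d' a c \<longleftrightarrow> d \<in> EE CC \<and> d' \<in> EE CC \<and>
     a \<in> hom CC (EA CC d) (EA CC d') \<and> c \<in> hom CC (EC CC d) (EC CC d') \<and>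
     Push CC a d = Pull CC c d'"

definition ET2 :: "('o,'m,'e) extri_data \<Rightarrow> bool" where
  "ET2 CC \<longleftrightarrow>
     (\<forall>d x y. Real CC d x y \<longrightarrow> d \<in> EE CC \<and>
        x \<in> hom CC (EA CC d) (Cod CC x) \<and> y \<in> hom CC (Cod CC x) (EC CC d)) \<and>
     (\<forall>d\<in>EE CC. \<exists>x y. Real CC d x y) \<and>
     (\<forall>d x y x' y'. Real CC d x y \<longrightarrow>
        (Real CC d x' y' \<longleftrightarrow> equiv_seq CC (EA CC d) (EC CC d) x y x' y')) \<and>
     (\<forall>d d' x y x' y' a c. Real CC d x y \<longrightarrow> Real CC d' x' y' \<longrightarrow> ext_mor CC d d' a c \<longrightarrow>
        (\<exists>b\<in>hom CC (Cod CC x) (Cod CC x'). Cmp CC b x = Cmp CC x' a \<and> Cmp CC y' b = Cmp CC c y)) \<and>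
     (\<forall>A C S i1 i2 p1 p2. A \<in> Ob CC \<longrightarrow> C \<in> Ob CC \<longrightarrow> biproduct CC A C S i1 i2 p1 p2 \<longrightarrow>
        Real CC (EZer CC C A) i1 p2) \<and>
     (\<forall>d d' x y x' y' SA a1 a2 q1 q2 SB b1 b2 s1 s2 SC c1 c2 r1 r2 t.
        Real CC d x y \<longrightarrow> Real CC d' x' y' \<longrightarrow>
        biproduct CC (EA CC d) (EA CC d') SA a1 a2 q1 q2 \<longrightarrow>
        biproduct CC (Cod CC x) (Cod CC x') SB b1 b2 s1 s2 \<longrightarrow>
        biproduct CC (EC CC d) (EC CC d') SC c1 c2 r1 r2 \<longrightarrow>
        t \<in> ext CC SC SA \<longrightarrow>
        Push CC q1 (Pull CC c1 t) = d \<longrightarrow>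
        Push CC q2 (Pull CC c2 t) = d' \<longrightarrow>
        Push CC q1 (Pull CC c2 t) = EZer CC (EC CC d') (EA CC d) \<longrightarrow>
        Push CC q2 (Pull CC c1 t) = EZer CC (EC CC d) (EA CC d') \<longrightarrow>
        Real CC t (Add CC (Cmp CC b1 (Cmp CC x q1)) (Cmp CC b2 (Cmp CC x' q2)))
                  (Add CC (Cmp CC c1 (Cmp CC y s1)) (Cmp CC c2 (Cmp CC y' s2))))"

definition ET3 :: "('o,'m,'e) extri_data \<Rightarrow> bool" where
  "ET3 CC \<longleftrightarrow>
     (\<forall>d d' x y x' y' a b. Real CC d x y \<longrightarrow> Real CC d' x' y' \<longrightarrow>
        a \<in> hom CC (EA CC d) (EA CC d') \<longrightarrow> b \<in> hom CC (Cod CC x) (Cod CC x') \<longrightarrow>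
        Cmp CC b x = Cmp CC x' a \<longrightarrow>
        (\<exists>c. ext_mor CC d d' a c \<and> Cmp CC c y = Cmp CC y' b))"

definition ET3op :: "('o,'m,'e) extri_data \<Rightarrow> bool" where
  "ET3op CC \<longleftrightarrow>
     (\<forall>d d' x y x' y' b c. Real CC d x y \<longrightarrow> Real CC d' x' y' \<longrightarrow>
        b \<in> hom CC (Cod CC x) (Cod CC x') \<longrightarrow> c \<in> hom CC (EC CC d) (EC CC d') \<longrightarrow>
        Cmp CC y' b = Cmp CC c y \<longrightarrow>
        (\<exists>a. ext_mor CC d d' a c \<and> Cmp CC x' a = Cmp CC b x))"

text \<open>(ET4): d in E(D,A) realized by A -f-> B -f'-> D, d' in E(F,B) realized by
  B -g-> C -g'-> F.\<close>
definition ET4 :: "('o,'m,'e) extri_data \<Rightarrow> bool" where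
  "ET4 CC \<longleftrightarrow>
     (\<forall>d d' f f' g g'. Real CC d f f' \<longrightarrow> Real CC d' g g' \<longrightarrow> EA CC d' = Cod CC f \<longrightarrow>
        (\<exists>d'' h h' dd e.
           Real CC d'' h h' \<and> h = Cmp CC g f \<and>
           dd \<in> hom CC (EC CC d) (EC CC d'') \<and> e \<in> hom CC (EC CC d'') (EC CC d') \<and>
           Cmp CC dd f' = Cmp CC h' g \<and> Cmp CC e h' = g' \<and>
           Real CC (Push CC f' d') dd e \<and>
           Pull CC dd d'' = d \<and> Push CC f d'' = Pull CC e d'))"

text \<open>(ET4)^op: d in E(B,D) realized by D -f'-> A -f-> B, d' in E(C,F) realized by
  F -g'-> B -g-> C.\<close>
definition ET4op :: "('o,'m,'e) extri_data \<Rightarrow> bool" where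
  "ET4op CC \<longleftrightarrow>
     (\<forall>d d' f f' g g'. Real CC d f' f \<longrightarrow> Real CC d' g' g \<longrightarrow> EC CC d = Cod CC g' \<longrightarrow>
        (\<exists>d'' h h' dd e.
           Real CC d'' h' h \<and> h = Cmp CC g f \<and>
           dd \<in> hom CC (EA CC d) (EA CC d'') \<and> e \<in> hom CC (EA CC d'') (EA CC d') \<and>
           f' = Cmp CC h' dd \<and> Cmp CC f h' = Cmp CC g' e \<and>
           Real CC (Pull CC g' d) dd e \<and>
           d' = Push CC e d'' \<and> Push CC dd d = Pull CC g d''))"

definition extriangulated :: "('o,'m,'e) extri_data \<Rightarrow> bool" where
  "extriangulated CC \<longleftrightarrow> additive CC \<and> ET1 CC \<and> ET2 CC \<and> ET3 CC \<and> ET3op CC \<and>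
     ET4 CC \<and> ET4op CC"

definition projective :: "('o,'m,'e) extri_data \<Rightarrow> 'o \<Rightarrow> bool" where
  "projective CC P \<longleftrightarrow> P \<in> Ob CC \<and>
     (\<forall>d x y c. Real CC d x y \<longrightarrow> c \<in> hom CC P (EC CC d) \<longrightarrow>
        (\<exists>b\<in>hom CC P (Cod CC x). Cmp CC y b = c))"

definition injective :: "('o,'m,'e) extri_data \<Rightarrow> 'o \<Rightarrow> bool" where
  "injective CC I \<longleftrightarrow> I \<in> Ob CC \<and>
     (\<forall>d x y a. Real CC d x y \<longrightarrow> a \<in> hom CC (EA CC d) I \<longrightarrow>
        (\<exists>b\<in>hom CC (Cod CC x) I. Cmp CC b x = a))"

definition enough_projectives :: "('o,'m,'e) extri_data \<Rightarrow> bool" where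
  "enough_projectives CC \<longleftrightarrow>
     (\<forall>X\<in>Ob CC. \<exists>d x y. Real CC d x y \<and> EC CC d = X \<and> projective CC (Cod CC x))"

definition enough_injectives :: "('o,'m,'e) extri_data \<Rightarrow> bool" where
  "enough_injectives CC \<longleftrightarrow>
     (\<forall>X\<in>Ob CC. \<exists>d x y. Real CC d x y \<and> EA CC d = X \<and> injective CC (Cod CC x))"

definition local_obj :: "('o,'m,'e) extri_data \<Rightarrow> 'o \<Rightarrow> bool" where
  "local_obj CC X \<longleftrightarrow> X \<in> Ob CC \<and> Idm CC X \<noteq> Zer CC X X \<and>
     (\<forall>f\<in>hom CC X X. is_iso CC X X f \<or> is_iso CC X X (Add CC (Idm CC X) (Neg CC f)))"

definition finite_dsum :: "('o,'m,'e) extri_data \<Rightarrow> 'o \<Rightarrow> 'o list \<Rightarrow> 'm list \<Rightarrow> 'm list \<Rightarrow> bool" where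
  "finite_dsum CC X Xs js ps \<longleftrightarrow> X \<in> Ob CC \<and>
     length js = length Xs \<and> length ps = length Xs \<and>
     (\<forall>j<length Xs. js ! j \<in> hom CC (Xs ! j) X \<and> ps ! j \<in> hom CC X (Xs ! j) \<and>
        (\<forall>l<length Xs. Cmp CC (ps ! l) (js ! j) =
           (if l = j then Idm CC (Xs ! j) else Zer CC (Xs ! j) (Xs ! l)))) \<and>
     foldr (Add CC) (map (\<lambda>j. Cmp CC (js ! j) (ps ! j)) [0..<length Xs]) (Zer CC X X) = Idm CC X"

definition krull_schmidt :: "('o,'m,'e) extri_data \<Rightarrow> bool" where
  "krull_schmidt CC \<longleftrightarrow>
     (\<forall>X\<in>Ob CC. \<exists>Xs js ps. finite_dsum CC X Xs js ps \<and> (\<forall>Y\<in>set Xs. local_obj CC Y))"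

section \<open>Subcategories, higher extensions, tilting\<close>

text \<open>Full additive subcategory closed under isomorphisms (given by its objects).\<close>
definition subcat :: "('o,'m,'e) extri_data \<Rightarrow> 'o set \<Rightarrow> bool" where
  "subcat CC T \<longleftrightarrow> T \<subseteq> Ob CC \<and>
     (\<forall>X Y f. X \<in> T \<longrightarrow> is_iso CC X Y f \<longrightarrow> Y \<in> T) \<and>
     (\<exists>Z\<in>T. zero_object CC Z) \<and>
     (\<forall>X\<in>T. \<forall>Y\<in>T. \<forall>S i1 i2 p1 p2. biproduct CC X Y S i1 i2 p1 p2 \<longrightarrow> S \<in> T)"

definition summand_closed :: "('o,'m,'e) extri_data \<Rightarrow> 'o set \<Rightarrow> bool" where
  "summand_closed CC T \<longleftrightarrow>
     (\<forall>X Y S i1 i2 p1 p2. biproduct CC X Y S i1 i2 p1 p2 \<longrightarrow> S \<in> T \<longrightarrow> X \<in> T)"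

definition Omega :: "('o,'m,'e) extri_data \<Rightarrow> 'o \<Rightarrow> 'o" where
  "Omega CC X = (SOME K. \<exists>d x y. Real CC d x y \<and> EA CC d = K \<and> EC CC d = X \<and>
                                  projective CC (Cod CC x))"

text \<open>E^i(X,Y) = E(Omega^(i-1) X, Y) = 0, for i >= 1.\<close>
definition Ehigh_zero :: "('o,'m,'e) extri_data \<Rightarrow> nat \<Rightarrow> 'o \<Rightarrow> 'o \<Rightarrow> bool" where
  "Ehigh_zero CC i X Y \<longleftrightarrow>
     ext CC ((Omega CC ^^ (i - 1)) X) Y \<subseteq> {EZer CC ((Omega CC ^^ (i - 1)) X) Y}"

definition pd_le :: "('o,'m,'e) extri_data \<Rightarrow> nat \<Rightarrow> 'o \<Rightarrow> bool" where
  "pd_le CC n A \<longleftrightarrow> (\<forall>Y\<in>Ob CC. Ehigh_zero CC (n + 1) A Y)"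

definition perp :: "('o,'m,'e) extri_data \<Rightarrow> 'o set \<Rightarrow> 'o set" where
  "perp CC S = {Y \<in> Ob CC. \<forall>i\<ge>1. \<forall>X\<in>S. Ehigh_zero CC i X Y}"

definition tilting :: "('o,'m,'e) extri_data \<Rightarrow> nat \<Rightarrow> 'o set \<Rightarrow> bool" where
  "tilting CC n T \<longleftrightarrow> subcat CC T \<and> summand_closed CC T \<and>
     (\<forall>X\<in>T. pd_le CC n X) \<and> T \<subseteq> perp CC T \<and>
     (\<forall>Y\<in>perp CC T. \<exists>d x y. Real CC d x y \<and> EC CC d = Y \<and>
        Cod CC x \<in> T \<and> EA CC d \<in> perp CC T)"

end

(* Reflexivity is T \<subseteq> T\<^sup>\<perp>.  The key fact is that T1 \<subseteq> T2\<^sup>\<perp> forces T1\<^sup>\<perp> \<subseteq> T2\<^sup>\<perp>: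
   for Y \<in> T1\<^sup>\<perp> and X \<in> T2 one shows E^i(X,Y) = 0 by downward induction on i.  Above
   pd X \<le> n this is automatic; a conflation Y' \<rightarrow> T \<rightarrow> Y with T \<in> T1 \<subseteq> T2\<^sup>\<perp> and Y' \<in> T1\<^sup>\<perp>
   then moves the vanishing of E^(i+1)(X,Y') down to E^i(X,Y) via the long exact sequence.
   This gives transitivity.  For antisymmetry, every X \<in> T1 \<subseteq> T2\<^sup>\<perp> sits in a conflation
   A \<rightarrow> T \<rightarrow> X with T \<in> T2 and A \<in> T2\<^sup>\<perp> \<subseteq> T1\<^sup>\<perp>; it splits because E(X,A) = 0, so X
   is a direct summand of T and lies in T2. *)

theory Submission
  imports Defs
begin

abbreviation ext_vanish :: "('o,'m,'e) extri_data \<Rightarrow> 'o \<Rightarrow> 'o \<Rightarrow> bool" where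
  "ext_vanish CC C A \<equiv> ext CC C A \<subseteq> {EZer CC C A}"

lemma abgroup_on_zero_closed: "abgroup_on G add z neg \<Longrightarrow> z \<in> G"
  unfolding abgroup_on_def by blast

lemma abgroup_on_add_closed: "abgroup_on G add z neg \<Longrightarrow> a \<in> G \<Longrightarrow> b \<in> G \<Longrightarrow> add a b \<in> G"
  unfolding abgroup_on_def by blast

lemma abgroup_on_add_zero_left: "abgroup_on G add z neg \<Longrightarrow> a \<in> G \<Longrightarrow> add z a = a"
  unfolding abgroup_on_def by blast

lemma abgroup_on_add_commute: "abgroup_on G add z neg \<Longrightarrow> a \<in> G \<Longrightarrow> b \<in> G \<Longrightarrow> add a b = add b a"
  unfolding abgroup_on_def by blast

lemma abgroup_on_add_zero_right: "abgroup_on G add z neg \<Longrightarrow> a \<in> G \<Longrightarrow> add a z = a"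
  using abgroup_on_add_zero_left abgroup_on_add_commute abgroup_on_zero_closed by metis

lemma abgroup_on_idem_eq_zero:
  assumes G: "abgroup_on G add z neg" and w: "w \<in> G" and ww: "add w w = w"
  shows "w = z"
proof -
  have zl: "add z w = w" and inv: "add (neg w) w = z" and nw: "neg w \<in> G"
    and assoc: "add (add (neg w) w) w = add (neg w) (add w w)"
    using G w unfolding abgroup_on_def by blast+
  have "w = add (add (neg w) w) w" using zl inv by simp
  also have "\<dots> = z" using assoc ww inv by simp
  finally show ?thesis .
qed

locale extriangulated_category =
  fixes CC :: "('o,'m,'e) extri_data"
  assumes extriangulated: "extriangulated CC"
begin

lemma additive: "additive CC" and ET1: "ET1 CC" and ET2: "ET2 CC" and ET3: "ET3 CC"
  and ET3op: "ET3op CC"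
  using extriangulated unfolding extriangulated_def by simp_all

lemma preadditive: "preadditive CC"
  using additive unfolding additive_def by simp

lemma category: "is_category CC"
  using preadditive unfolding preadditive_def by simp

lemma hom_objects: "f \<in> hom CC X Y \<Longrightarrow> X \<in> Ob CC \<and> Y \<in> Ob CC"
  using category unfolding is_category_def hom_def by blast

lemma hom_Cod: "f \<in> hom CC X Y \<Longrightarrow> Cod CC f = Y"
  unfolding hom_def by simp

lemma comp_in_hom: "f \<in> hom CC X Y \<Longrightarrow> g \<in> hom CC Y Z \<Longrightarrow> Cmp CC g f \<in> hom CC X Z"
  using category unfolding is_category_def by (elim conjE) blast

lemma id_in_hom: "X \<in> Ob CC \<Longrightarrow> Idm CC X \<in> hom CC X X"
  using category unfolding is_category_def by (elim conjE) blast

lemma comp_id_left: "f \<in> hom CC X Y \<Longrightarrow> Cmp CC (Idm CC Y) f = f"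
  using category unfolding is_category_def by (elim conjE) blast

lemma comp_id_right: "f \<in> hom CC X Y \<Longrightarrow> Cmp CC f (Idm CC X) = f"
  using category unfolding is_category_def by (elim conjE) blast

lemma comp_assoc: "f \<in> hom CC W X \<Longrightarrow> g \<in> hom CC X Y \<Longrightarrow> h \<in> hom CC Y Z \<Longrightarrow>
    Cmp CC h (Cmp CC g f) = Cmp CC (Cmp CC h g) f"
  using category unfolding is_category_def by (elim conjE) blast

lemma hom_abgroup: "X \<in> Ob CC \<Longrightarrow> Y \<in> Ob CC \<Longrightarrow>
    abgroup_on (hom CC X Y) (Add CC) (Zer CC X Y) (Neg CC)"
  using preadditive unfolding preadditive_def by (elim conjE) blast

lemma comp_add_right: "f \<in> hom CC X Y \<Longrightarrow> f' \<in> hom CC X Y \<Longrightarrow> g \<in> hom CC Y Z \<Longrightarrow>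
    Cmp CC g (Add CC f f') = Add CC (Cmp CC g f) (Cmp CC g f')"
  using preadditive unfolding preadditive_def by (elim conjE) blast

lemma comp_add_left: "f \<in> hom CC X Y \<Longrightarrow> g \<in> hom CC Y Z \<Longrightarrow> g' \<in> hom CC Y Z \<Longrightarrow>
    Cmp CC (Add CC g g') f = Add CC (Cmp CC g f) (Cmp CC g' f)"
  using preadditive unfolding preadditive_def by (elim conjE) blast

lemma zero_in_hom: "X \<in> Ob CC \<Longrightarrow> Y \<in> Ob CC \<Longrightarrow> Zer CC X Y \<in> hom CC X Y"
  by (rule abgroup_on_zero_closed[OF hom_abgroup])

lemma add_in_hom: "f \<in> hom CC X Y \<Longrightarrow> g \<in> hom CC X Y \<Longrightarrow> Add CC f g \<in> hom CC X Y"
  using abgroup_on_add_closed[OF hom_abgroup] hom_objects by blast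

lemma add_zero_left: "f \<in> hom CC X Y \<Longrightarrow> Add CC (Zer CC X Y) f = f"
  using abgroup_on_add_zero_left[OF hom_abgroup] hom_objects by blast

lemma add_zero_right: "f \<in> hom CC X Y \<Longrightarrow> Add CC f (Zer CC X Y) = f"
  using abgroup_on_add_zero_right[OF hom_abgroup] hom_objects by blast

lemma add_commute: "f \<in> hom CC X Y \<Longrightarrow> g \<in> hom CC X Y \<Longrightarrow> Add CC f g = Add CC g f"
  using abgroup_on_add_commute[OF hom_abgroup] hom_objects by blast

lemma comp_zero_right:
  assumes g: "g \<in> hom CC Y Z" and X: "X \<in> Ob CC"
  shows "Cmp CC g (Zer CC X Y) = Zer CC X Z"
proof (rule abgroup_on_idem_eq_zero)
  have z: "Zer CC X Y \<in> hom CC X Y" using zero_in_hom X hom_objects[OF g] by blast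
  show "abgroup_on (hom CC X Z) (Add CC) (Zer CC X Z) (Neg CC)"
    using hom_abgroup X hom_objects[OF g] by blast
  show "Cmp CC g (Zer CC X Y) \<in> hom CC X Z" using comp_in_hom[OF z g] .
  show "Add CC (Cmp CC g (Zer CC X Y)) (Cmp CC g (Zer CC X Y)) = Cmp CC g (Zer CC X Y)"
    using comp_add_right[OF z z g, symmetric] add_zero_left[OF z] by simp
qed

lemma biproduct_exists: "X \<in> Ob CC \<Longrightarrow> Y \<in> Ob CC \<Longrightarrow> \<exists>S i1 i2 p1 p2. biproduct CC X Y S i1 i2 p1 p2"
  using additive unfolding additive_def by blast

lemma biproduct_swap:
  assumes b: "biproduct CC X Y S i1 i2 p1 p2"
  shows "biproduct CC Y X S i2 i1 p2 p1"
proof -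
  have "i1 \<in> hom CC X S" "i2 \<in> hom CC Y S" "p1 \<in> hom CC S X" "p2 \<in> hom CC S Y"
    using b unfolding biproduct_def by auto
  hence "Add CC (Cmp CC i2 p2) (Cmp CC i1 p1) = Add CC (Cmp CC i1 p1) (Cmp CC i2 p2)"
    using add_commute comp_in_hom by blast
  thus ?thesis using b unfolding biproduct_def by auto
qed

lemma ext_iff: "d \<in> ext CC C A \<longleftrightarrow> d \<in> EE CC \<and> EC CC d = C \<and> EA CC d = A"
  unfolding ext_def by auto

lemma ext_objects: "d \<in> ext CC C A \<Longrightarrow> C \<in> Ob CC \<and> A \<in> Ob CC"
  using ET1 unfolding ET1_def ext_def by auto

lemma ext_abgroup: "C \<in> Ob CC \<Longrightarrow> A \<in> Ob CC \<Longrightarrow>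
    abgroup_on (ext CC C A) (EAdd CC) (EZer CC C A) (ENeg CC)"
  using ET1 unfolding ET1_def by simp

lemma zero_in_ext: "C \<in> Ob CC \<Longrightarrow> A \<in> Ob CC \<Longrightarrow> EZer CC C A \<in> ext CC C A"
  by (rule abgroup_on_zero_closed[OF ext_abgroup])

lemma push_in_ext: "a \<in> hom CC A A' \<Longrightarrow> d \<in> ext CC C A \<Longrightarrow> Push CC a d \<in> ext CC C A'"
  using ET1 unfolding ET1_def by simp

lemma pull_in_ext: "c \<in> hom CC C' C \<Longrightarrow> d \<in> ext CC C A \<Longrightarrow> Pull CC c d \<in> ext CC C' A"
  using ET1 unfolding ET1_def by simp

lemma push_id: "d \<in> ext CC C A \<Longrightarrow> Push CC (Idm CC A) d = d"
  using ET1 unfolding ET1_def by simp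

lemma pull_id: "d \<in> ext CC C A \<Longrightarrow> Pull CC (Idm CC C) d = d"
  using ET1 unfolding ET1_def by simp

lemma push_comp: "a \<in> hom CC A A' \<Longrightarrow> a' \<in> hom CC A' A'' \<Longrightarrow> d \<in> ext CC C A \<Longrightarrow>
    Push CC (Cmp CC a' a) d = Push CC a' (Push CC a d)"
  using ET1 unfolding ET1_def by simp

lemma pull_comp: "c \<in> hom CC C' C \<Longrightarrow> c' \<in> hom CC C'' C' \<Longrightarrow> d \<in> ext CC C A \<Longrightarrow>
    Pull CC (Cmp CC c c') d = Pull CC c' (Pull CC c d)"
  using ET1 unfolding ET1_def by simp

lemma push_zero:
  assumes a: "a \<in> hom CC A A'" and C: "C \<in> Ob CC"
  shows "Push CC a (EZer CC C A) = EZer CC C A'"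
proof (rule abgroup_on_idem_eq_zero)
  have z: "EZer CC C A \<in> ext CC C A" using zero_in_ext C hom_objects[OF a] by blast
  show "abgroup_on (ext CC C A') (EAdd CC) (EZer CC C A') (ENeg CC)"
    using ext_abgroup C hom_objects[OF a] by blast
  show "Push CC a (EZer CC C A) \<in> ext CC C A'" using push_in_ext[OF a z] .
  have "EAdd CC (EZer CC C A) (EZer CC C A) = EZer CC C A"
    using abgroup_on_add_zero_left[OF ext_abgroup z] C hom_objects[OF a] by blast
  moreover have "Push CC a (EAdd CC (EZer CC C A) (EZer CC C A))
      = EAdd CC (Push CC a (EZer CC C A)) (Push CC a (EZer CC C A))"
    using ET1 a z unfolding ET1_def by simp
  ultimately show "EAdd CC (Push CC a (EZer CC C A)) (Push CC a (EZer CC C A))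
      = Push CC a (EZer CC C A)" by simp
qed

lemma pull_zero:
  assumes c: "c \<in> hom CC C' C" and A: "A \<in> Ob CC"
  shows "Pull CC c (EZer CC C A) = EZer CC C' A"
proof (rule abgroup_on_idem_eq_zero)
  have z: "EZer CC C A \<in> ext CC C A" using zero_in_ext A hom_objects[OF c] by blast
  show "abgroup_on (ext CC C' A) (EAdd CC) (EZer CC C' A) (ENeg CC)"
    using ext_abgroup A hom_objects[OF c] by blast
  show "Pull CC c (EZer CC C A) \<in> ext CC C' A" using pull_in_ext[OF c z] .
  have "EAdd CC (EZer CC C A) (EZer CC C A) = EZer CC C A"
    using abgroup_on_add_zero_left[OF ext_abgroup z] A hom_objects[OF c] by blast
  moreover have "Pull CC c (EAdd CC (EZer CC C A) (EZer CC C A))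
      = EAdd CC (Pull CC c (EZer CC C A)) (Pull CC c (EZer CC C A))"
    using ET1 c z unfolding ET1_def by simp
  ultimately show "EAdd CC (Pull CC c (EZer CC C A)) (Pull CC c (EZer CC C A))
      = Pull CC c (EZer CC C A)" by simp
qed

lemma realization_hom: "Real CC d x y \<Longrightarrow>
    d \<in> EE CC \<and> x \<in> hom CC (EA CC d) (Cod CC x) \<and> y \<in> hom CC (Cod CC x) (EC CC d)"
  using ET2 unfolding ET2_def by (elim conjE) blast

lemma realization_exists: "d \<in> EE CC \<Longrightarrow> \<exists>x y. Real CC d x y"
  using ET2 unfolding ET2_def by (elim conjE) blast

lemma realization_equiv: "Real CC d x y \<Longrightarrow> Real CC d x' y' \<Longrightarrow>
    equiv_seq CC (EA CC d) (EC CC d) x y x' y'"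
  using ET2 unfolding ET2_def by (elim conjE) blast

lemma realization_mor_lift: "Real CC d x y \<Longrightarrow> Real CC d' x' y' \<Longrightarrow> ext_mor CC d d' a c \<Longrightarrow>
    \<exists>b\<in>hom CC (Cod CC x) (Cod CC x'). Cmp CC b x = Cmp CC x' a \<and> Cmp CC y' b = Cmp CC c y"
  using ET2 unfolding ET2_def by (elim conjE) blast

lemma zero_realization: "A \<in> Ob CC \<Longrightarrow> C \<in> Ob CC \<Longrightarrow> biproduct CC A C S i1 i2 p1 p2 \<Longrightarrow>
    Real CC (EZer CC C A) i1 p2"
  using ET2 unfolding ET2_def by simp

lemma ET3_complete: "Real CC d x y \<Longrightarrow> Real CC d' x' y' \<Longrightarrow>
    a \<in> hom CC (EA CC d) (EA CC d') \<Longrightarrow> b \<in> hom CC (Cod CC x) (Cod CC x') \<Longrightarrow>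
    Cmp CC b x = Cmp CC x' a \<Longrightarrow> \<exists>c. ext_mor CC d d' a c \<and> Cmp CC c y = Cmp CC y' b"
  using ET3 unfolding ET3_def by blast

lemma ET3op_complete: "Real CC d x y \<Longrightarrow> Real CC d' x' y' \<Longrightarrow>
    b \<in> hom CC (Cod CC x) (Cod CC x') \<Longrightarrow> c \<in> hom CC (EC CC d) (EC CC d') \<Longrightarrow>
    Cmp CC y' b = Cmp CC c y \<Longrightarrow> \<exists>a. ext_mor CC d d' a c \<and> Cmp CC x' a = Cmp CC b x"
  using ET3op unfolding ET3op_def by blast

lemma realization_in_ext: "Real CC d x y \<Longrightarrow> d \<in> ext CC (EC CC d) (EA CC d)"
  using realization_hom ext_iff by blast

lemma biproduct_copairing:
  assumes b: "biproduct CC X Y S i1 i2 p1 p2" and f: "f \<in> hom CC X Z" and g: "g \<in> hom CC Y Z"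
  shows "\<exists>h\<in>hom CC S Z. Cmp CC h i1 = f \<and> Cmp CC h i2 = g"
proof
  have i: "i1 \<in> hom CC X S" "i2 \<in> hom CC Y S" and p: "p1 \<in> hom CC S X" "p2 \<in> hom CC S Y"
    and pi: "Cmp CC p1 i1 = Idm CC X" "Cmp CC p2 i2 = Idm CC Y"
      "Cmp CC p1 i2 = Zer CC Y X" "Cmp CC p2 i1 = Zer CC X Y"
    using b unfolding biproduct_def by auto
  have fp: "Cmp CC f p1 \<in> hom CC S Z" and gp: "Cmp CC g p2 \<in> hom CC S Z"
    using comp_in_hom p f g by blast+
  have XY: "X \<in> Ob CC" "Y \<in> Ob CC" using f g hom_objects by blast+
  let ?h = "Add CC (Cmp CC f p1) (Cmp CC g p2)"
  show "?h \<in> hom CC S Z" using add_in_hom[OF fp gp] .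
  have "Cmp CC ?h i1 = Add CC (Cmp CC f (Cmp CC p1 i1)) (Cmp CC g (Cmp CC p2 i1))"
    using comp_add_left[OF i(1) fp gp] comp_assoc[OF i(1) p(1) f] comp_assoc[OF i(1) p(2) g] by simp
  also have "\<dots> = f"
    using pi comp_id_right[OF f] comp_zero_right[OF g XY(1)] add_zero_right[OF f] by simp
  finally have "Cmp CC ?h i1 = f" .
  moreover have "Cmp CC ?h i2 = Add CC (Cmp CC f (Cmp CC p1 i2)) (Cmp CC g (Cmp CC p2 i2))"
    using comp_add_left[OF i(2) fp gp] comp_assoc[OF i(2) p(1) f] comp_assoc[OF i(2) p(2) g] by simp
  moreover have "\<dots> = g"
    using pi comp_id_right[OF g] comp_zero_right[OF f XY(2)] add_zero_left[OF g] by simp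
  ultimately show "Cmp CC ?h i1 = f \<and> Cmp CC ?h i2 = g" by simp
qed

lemma pull_deflation_zero:
  assumes r: "Real CC e x y"
  shows "Pull CC y e = EZer CC (Cod CC x) (EA CC e)"
proof -
  define A B where "A = EA CC e" and "B = Cod CC x"
  have x: "x \<in> hom CC A B" and y: "y \<in> hom CC B (EC CC e)"
    using realization_hom[OF r] unfolding A_def B_def by auto
  have AB: "A \<in> Ob CC" "B \<in> Ob CC" using hom_objects[OF x] by auto
  obtain S i1 i2 p1 p2 where bp: "biproduct CC A B S i1 i2 p1 p2"
    using biproduct_exists[OF AB] by blast
  have i: "i1 \<in> hom CC A S" "i2 \<in> hom CC B S" and p2: "p2 \<in> hom CC S B"
    and p2i2: "Cmp CC p2 i2 = Idm CC B"
    using bp unfolding biproduct_def by auto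
  obtain b where b: "b \<in> hom CC S B" "Cmp CC b i1 = x" "Cmp CC b i2 = Idm CC B"
    using biproduct_copairing[OF bp x id_in_hom[OF AB(2)]] by blast
  have r0: "Real CC (EZer CC B A) i1 p2" using zero_realization[OF AB bp] .
  have z: "EZer CC B A \<in> ext CC B A" using zero_in_ext AB by blast
  have "Cmp CC b i1 = Cmp CC x (Idm CC A)" using b(2) comp_id_right[OF x] by simp
  moreover have "Idm CC A \<in> hom CC (EA CC (EZer CC B A)) (EA CC e)"
    and "b \<in> hom CC (Cod CC i1) (Cod CC x)"
    using id_in_hom AB z b(1) hom_Cod[OF i(1)] unfolding ext_iff A_def B_def by auto
  ultimately obtain c where c: "ext_mor CC (EZer CC B A) e (Idm CC A) c" "Cmp CC c p2 = Cmp CC y b"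
    using ET3_complete[OF r0 r] by blast
  have ch: "c \<in> hom CC B (EC CC e)" and push: "Push CC (Idm CC A) (EZer CC B A) = Pull CC c e"
    using c(1) z unfolding ext_mor_def ext_iff by auto
  have "c = Cmp CC (Cmp CC c p2) i2" using comp_assoc[OF i(2) p2 ch] p2i2 comp_id_right[OF ch] by simp
  also have "\<dots> = y" using c(2) comp_assoc[OF i(2) b(1) y] b(3) comp_id_right[OF y] by simp
  finally show ?thesis using push push_id[OF z] unfolding A_def B_def by simp
qed

lemma projective_ext_vanish:
  assumes Q: "projective CC Q"
  shows "ext_vanish CC Q C"
proof
  fix e assume e: "e \<in> ext CC Q C"
  obtain x y where r: "Real CC e x y" using realization_exists e unfolding ext_iff by blast
  have y: "y \<in> hom CC (Cod CC x) Q" using realization_hom[OF r] e unfolding ext_iff by auto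
  obtain s where s: "s \<in> hom CC Q (Cod CC x)" "Cmp CC y s = Idm CC Q"
    using Q r id_in_hom e unfolding projective_def ext_iff by metis
  have "e = Pull CC (Cmp CC y s) e" using s(2) pull_id[OF e] by simp
  also have "\<dots> = Pull CC s (Pull CC y e)" using pull_comp[OF y s(1) e] .
  also have "\<dots> = EZer CC Q C"
    using pull_deflation_zero[OF r] pull_zero[OF s(1)] e ext_objects unfolding ext_iff by auto
  finally show "e \<in> {EZer CC Q C}" by simp
qed

lemma split_realization_iso:
  assumes r: "Real CC d x y" and d0: "d = EZer CC (EC CC d) (EA CC d)"
    and bp: "biproduct CC (EA CC d) (EC CC d) S i1 i2 p1 p2"
  shows "\<exists>b. is_iso CC (Cod CC x) S b \<and> Cmp CC b x = i1"
proof -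
  have i1: "i1 \<in> hom CC (EA CC d) S" using bp unfolding biproduct_def by auto
  have "Real CC d i1 p2"
    using zero_realization[OF _ _ bp] hom_objects[OF i1] realization_hom[OF r] ext_objects
      realization_in_ext[OF r] d0 by metis
  then obtain B B' b where "x \<in> hom CC (EA CC d) B" "i1 \<in> hom CC (EA CC d) B'"
    "is_iso CC B B' b" "Cmp CC b x = i1"
    using realization_equiv[OF r] unfolding equiv_seq_def by blast
  thus ?thesis using hom_Cod i1 by metis
qed

lemma projective_retract:
  assumes P: "projective CC P" and u: "u \<in> hom CC K P" and r: "r \<in> hom CC P K"
    and ru: "Cmp CC r u = Idm CC K"
  shows "projective CC K"
  unfolding projective_def
proof (intro conjI allI impI)
  show "K \<in> Ob CC" using hom_objects[OF u] by simp
  fix d x y c assume rd: "Real CC d x y" and c: "c \<in> hom CC K (EC CC d)"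
  obtain g where g: "g \<in> hom CC P (Cod CC x)" "Cmp CC y g = Cmp CC c r"
    using P rd comp_in_hom[OF r c] unfolding projective_def by metis
  have y: "y \<in> hom CC (Cod CC x) (EC CC d)" using realization_hom[OF rd] by auto
  have "Cmp CC y (Cmp CC g u) = Cmp CC c (Cmp CC r u)"
    using comp_assoc[OF u g(1) y] comp_assoc[OF u r c] g(2) by simp
  also have "\<dots> = c" using ru comp_id_right[OF c] by simp
  finally show "\<exists>b\<in>hom CC K (Cod CC x). Cmp CC y b = c" using comp_in_hom[OF u g(1)] by blast
qed

lemma split_inflation_projective:
  assumes r: "Real CC d u v" and P: "projective CC (Cod CC u)"
    and d0: "d = EZer CC (EC CC d) (EA CC d)"
  shows "projective CC (EA CC d)"
proof -
  have u: "u \<in> hom CC (EA CC d) (Cod CC u)" using realization_hom[OF r] by auto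
  obtain S i1 i2 p1 p2 where bp: "biproduct CC (EA CC d) (EC CC d) S i1 i2 p1 p2"
    using biproduct_exists realization_in_ext[OF r] ext_objects by blast
  have p1: "p1 \<in> hom CC S (EA CC d)" and p1i1: "Cmp CC p1 i1 = Idm CC (EA CC d)"
    using bp unfolding biproduct_def by auto
  obtain b where b: "is_iso CC (Cod CC u) S b" "Cmp CC b u = i1"
    using split_realization_iso[OF r d0 bp] by blast
  have bh: "b \<in> hom CC (Cod CC u) S" using b(1) unfolding is_iso_def by simp
  show ?thesis
  proof (rule projective_retract[OF P u comp_in_hom[OF bh p1]])
    show "Cmp CC (Cmp CC p1 b) u = Idm CC (EA CC d)"
      using comp_assoc[OF u bh p1] b(2) p1i1 by simp
  qed
qed

lemma lift_through_deflation:
  assumes r: "Real CC d x y" and a: "a \<in> hom CC K (EC CC d)"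
    and a0: "Pull CC a d = EZer CC K (EA CC d)"
  shows "\<exists>b\<in>hom CC K (Cod CC x). Cmp CC y b = a"
proof -
  define A where "A = EA CC d"
  have dext: "d \<in> ext CC (EC CC d) A" using realization_in_ext[OF r] unfolding A_def .
  have y: "y \<in> hom CC (Cod CC x) (EC CC d)" using realization_hom[OF r] by auto
  have AK: "A \<in> Ob CC" "K \<in> Ob CC" using ext_objects[OF dext] hom_objects[OF a] by auto
  obtain S i1 i2 p1 p2 where bp: "biproduct CC A K S i1 i2 p1 p2"
    using biproduct_exists[OF AK] by blast
  have i: "i1 \<in> hom CC A S" "i2 \<in> hom CC K S" and p2: "p2 \<in> hom CC S K"
    and p2i2: "Cmp CC p2 i2 = Idm CC K"
    using bp unfolding biproduct_def by auto
  have z: "EZer CC K A \<in> ext CC K A" using zero_in_ext AK by blast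
  \<comment> \<open>(1, a) maps the split conflation A \<rightarrow> A \<oplus> K \<rightarrow> K to d\<close>
  have "ext_mor CC (EZer CC K A) d (Idm CC A) a"
    unfolding ext_mor_def using z dext id_in_hom[OF AK(1)] a a0 push_id[OF z]
    unfolding ext_iff A_def by auto
  then obtain b' where b': "b' \<in> hom CC S (Cod CC x)" "Cmp CC y b' = Cmp CC a p2"
    using realization_mor_lift[OF zero_realization[OF AK bp] r] hom_Cod[OF i(1)] by metis
  have "Cmp CC y (Cmp CC b' i2) = Cmp CC a (Cmp CC p2 i2)"
    using comp_assoc[OF i(2) b'(1) y] comp_assoc[OF i(2) p2 a] b'(2) by simp
  also have "\<dots> = a" using p2i2 comp_id_right[OF a] by simp
  finally show ?thesis using comp_in_hom[OF i(2) b'(1)] by blast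
qed

lemma ext_eq_push_of_projective_conflation:
  assumes r: "Real CC d u v" and P: "projective CC (Cod CC u)"
    and e: "e \<in> ext CC (EC CC d) C"
  shows "\<exists>a\<in>hom CC (EA CC d) C. Push CC a d = e"
proof -
  obtain x y where re: "Real CC e x y" using realization_exists e unfolding ext_iff by blast
  have v: "v \<in> hom CC (Cod CC u) (EC CC d)" using realization_hom[OF r] by auto
  have W: "EC CC d \<in> Ob CC" using hom_objects[OF v] by simp
  obtain g where g: "g \<in> hom CC (Cod CC u) (Cod CC x)" "Cmp CC y g = v"
    using P re v e unfolding projective_def ext_iff by metis
  have "Cmp CC y g = Cmp CC (Idm CC (EC CC d)) v" using g(2) comp_id_left[OF v] by simp
  then obtain a where "ext_mor CC d e a (Idm CC (EC CC d))"
    using ET3op_complete[OF r re g(1)] id_in_hom[OF W] e unfolding ext_iff by auto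
  hence "a \<in> hom CC (EA CC d) C" "Push CC a d = Pull CC (Idm CC (EC CC d)) e"
    using e unfolding ext_mor_def ext_iff by auto
  thus ?thesis using pull_id[OF e] by auto
qed

text \<open>Exactness of E(W,B) \<rightarrow> E(W,C) \<rightarrow> E(K,A) in the long exact sequence of A \<rightarrow> B \<rightarrow> C,
  where K \<rightarrow> P \<rightarrow> W is a conflation with P projective.\<close>
lemma ext_vanish_dimension_shift:
  assumes rw: "Real CC \<delta> u v" and P: "projective CC (Cod CC u)" and r: "Real CC d x y"
    and vB: "ext_vanish CC (EC CC \<delta>) (Cod CC x)"
    and vA: "ext_vanish CC (EA CC \<delta>) (EA CC d)"
  shows "ext_vanish CC (EC CC \<delta>) (EC CC d)"
proof
  fix e assume e: "e \<in> ext CC (EC CC \<delta>) (EC CC d)"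
  obtain a where a: "a \<in> hom CC (EA CC \<delta>) (EC CC d)" "Push CC a \<delta> = e"
    using ext_eq_push_of_projective_conflation[OF rw P e] by blast
  have "Pull CC a d \<in> ext CC (EA CC \<delta>) (EA CC d)"
    using pull_in_ext[OF a(1) realization_in_ext[OF r]] .
  then obtain b where b: "b \<in> hom CC (EA CC \<delta>) (Cod CC x)" "Cmp CC y b = a"
    using lift_through_deflation[OF r a(1)] vA by blast
  have y: "y \<in> hom CC (Cod CC x) (EC CC d)" using realization_hom[OF r] by auto
  have \<delta>: "\<delta> \<in> ext CC (EC CC \<delta>) (EA CC \<delta>)" using realization_in_ext[OF rw] .
  have "e = Push CC y (Push CC b \<delta>)" using a(2) b(2) push_comp[OF b(1) y \<delta>] by simp
  also have "Push CC b \<delta> = EZer CC (EC CC \<delta>) (Cod CC x)" using push_in_ext[OF b(1) \<delta>] vB by blast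
  also have "Push CC y \<dots> = EZer CC (EC CC \<delta>) (EC CC d)"
    using push_zero[OF y] ext_objects[OF \<delta>] by blast
  finally show "e \<in> {EZer CC (EC CC \<delta>) (EC CC d)}" by simp
qed

end

section \<open>Syzygies and higher extensions\<close>

locale extriangulated_enough_projectives = extriangulated_category +
  assumes enough_projectives: "enough_projectives CC"
begin

lemma Omega_realization:
  assumes W: "W \<in> Ob CC"
  shows "\<exists>d x y. Real CC d x y \<and> EA CC d = Omega CC W \<and> EC CC d = W \<and> projective CC (Cod CC x)"
proof -
  have "\<exists>K d x y. Real CC d x y \<and> EA CC d = K \<and> EC CC d = W \<and> projective CC (Cod CC x)"
    using enough_projectives W unfolding enough_projectives_def by blast
  from someI_ex[OF this] show ?thesis unfolding Omega_def .
qed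

lemma Omega_in_Ob: "W \<in> Ob CC \<Longrightarrow> Omega CC W \<in> Ob CC"
  using Omega_realization realization_in_ext ext_objects by metis

lemma Omega_iter_in_Ob: "X \<in> Ob CC \<Longrightarrow> (Omega CC ^^ k) X \<in> Ob CC"
  by (induction k) (auto simp: Omega_in_Ob)

text \<open>If E(W,-) vanishes, the syzygy conflation of W splits, so Omega W is a summand of a
  projective.\<close>
lemma ext_vanish_Omega:
  assumes W: "W \<in> Ob CC" and v: "\<And>Y. ext_vanish CC W Y"
  shows "ext_vanish CC (Omega CC W) Y"
proof -
  obtain d x y where r: "Real CC d x y" "EA CC d = Omega CC W" "EC CC d = W"
    "projective CC (Cod CC x)"
    using Omega_realization[OF W] by blast
  have "d = EZer CC (EC CC d) (EA CC d)" using v realization_in_ext[OF r(1)] r(3) by blast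
  hence "projective CC (Omega CC W)" using split_inflation_projective[OF r(1) r(4)] r(2) by simp
  thus ?thesis using projective_ext_vanish by blast
qed

lemma ext_vanish_Omega_iter:
  assumes W: "W \<in> Ob CC" and v: "\<And>Y. ext_vanish CC W Y"
  shows "ext_vanish CC ((Omega CC ^^ k) W) Y"
proof (induction k arbitrary: Y)
  case 0 show ?case using v by simp
next
  case (Suc k) show ?case using ext_vanish_Omega[OF Omega_iter_in_Ob[OF W] Suc] by simp
qed

lemma Ehigh_zero_above_pd:
  assumes X: "X \<in> Ob CC" and pd: "pd_le CC n X" and m: "n + 1 \<le> m"
  shows "Ehigh_zero CC m X Y"
proof -
  have v: "ext_vanish CC ((Omega CC ^^ n) X) Z" for Z
    using pd ext_objects unfolding pd_le_def Ehigh_zero_def by fastforce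
  have "m - 1 = (m - 1 - n) + n" using m by simp
  hence "(Omega CC ^^ (m - 1)) X = (Omega CC ^^ (m - 1 - n)) ((Omega CC ^^ n) X)"
    by (metis funpow_add comp_apply)
  thus ?thesis unfolding Ehigh_zero_def
    using ext_vanish_Omega_iter[OF Omega_iter_in_Ob[OF X] v] by simp
qed

lemma Ehigh_zero_dimension_shift:
  assumes X: "X \<in> Ob CC" and i: "1 \<le> i" and r: "Real CC d x y"
    and vB: "Ehigh_zero CC i X (Cod CC x)" and vA: "Ehigh_zero CC (Suc i) X (EA CC d)"
  shows "Ehigh_zero CC i X (EC CC d)"
proof -
  define W where "W = (Omega CC ^^ (i - 1)) X"
  obtain \<delta> u v where rw: "Real CC \<delta> u v" "EA CC \<delta> = Omega CC W" "EC CC \<delta> = W"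
    "projective CC (Cod CC u)"
    using Omega_realization[OF Omega_iter_in_Ob[OF X]] unfolding W_def by blast
  have "(Omega CC ^^ (Suc i - 1)) X = Omega CC W" using i unfolding W_def by (cases i) auto
  thus ?thesis
    using ext_vanish_dimension_shift[OF rw(1) rw(4) r] vA vB rw(2,3)
    unfolding Ehigh_zero_def W_def by simp
qed

section \<open>Tilting subcategories\<close>

lemma tilting_subset_Ob: "tilting CC n T \<Longrightarrow> T \<subseteq> Ob CC"
  unfolding tilting_def subcat_def by blast

lemma Ehigh_zero_perp_descent:
  assumes t1: "tilting CC n T1" and t2: "tilting CC n T2" and le: "T1 \<subseteq> perp CC T2"
    and X: "X \<in> T2"
  shows "Y \<in> perp CC T1 \<Longrightarrow> 1 \<le> i \<Longrightarrow> n + 1 \<le> i + k \<Longrightarrow> Ehigh_zero CC i X Y"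
proof (induction k arbitrary: Y i)
  case 0
  have "X \<in> Ob CC" "pd_le CC n X" using X t2 tilting_subset_Ob unfolding tilting_def by auto
  then show ?case using Ehigh_zero_above_pd 0 by simp
next
  case (Suc k)
  obtain d x y where r: "Real CC d x y" "EC CC d = Y" "Cod CC x \<in> T1" "EA CC d \<in> perp CC T1"
    using t1 Suc.prems(1) unfolding tilting_def by blast
  have "Ehigh_zero CC (Suc i) X (EA CC d)" using Suc.IH[OF r(4)] Suc.prems(2,3) by simp
  moreover have "Ehigh_zero CC i X (Cod CC x)"
    using le r(3) X Suc.prems(2) unfolding perp_def by blast
  ultimately show ?case
    using Ehigh_zero_dimension_shift[OF _ Suc.prems(2) r(1)] X t2 tilting_subset_Ob r(2) by blast
qed

lemma perp_subset_perp_of_tilting: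
  assumes t1: "tilting CC n T1" and t2: "tilting CC n T2" and le: "T1 \<subseteq> perp CC T2"
  shows "perp CC T1 \<subseteq> perp CC T2"
proof
  fix Y assume Y: "Y \<in> perp CC T1"
  have "Ehigh_zero CC i X Y" if "1 \<le> i" "X \<in> T2" for i X
    using Ehigh_zero_perp_descent[OF t1 t2 le that(2) Y, of i n] that(1) by simp
  thus "Y \<in> perp CC T2" using Y unfolding perp_def by blast
qed

lemma tilting_antisym:
  assumes t1: "tilting CC n T1" and t2: "tilting CC n T2"
    and le12: "T1 \<subseteq> perp CC T2" and le21: "T2 \<subseteq> perp CC T1"
  shows "T1 \<subseteq> T2"
proof
  fix X assume X: "X \<in> T1"
  obtain d x y where r: "Real CC d x y" "EC CC d = X" "Cod CC x \<in> T2" "EA CC d \<in> perp CC T2"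
    using t2 X le12 unfolding tilting_def by blast
  have "EA CC d \<in> perp CC T1" using perp_subset_perp_of_tilting[OF t2 t1 le21] r(4) by blast
  hence "Ehigh_zero CC 1 X (EA CC d)" using X unfolding perp_def by blast
  hence d0: "d = EZer CC (EC CC d) (EA CC d)"
    using realization_in_ext[OF r(1)] r(2) unfolding Ehigh_zero_def by auto
  obtain S i1 i2 p1 p2 where bp: "biproduct CC (EA CC d) (EC CC d) S i1 i2 p1 p2"
    using biproduct_exists realization_in_ext[OF r(1)] ext_objects by blast
  obtain b where "is_iso CC (Cod CC x) S b" using split_realization_iso[OF r(1) d0 bp] by blast
  hence "S \<in> T2" using t2 r(3) unfolding tilting_def subcat_def by blast
  thus "X \<in> T2" using t2 biproduct_swap[OF bp] r(2) unfolding tilting_def summand_closed_def by blast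
qed

end

theorem corollary4p14:
  fixes CC :: "('o,'m,'e) extri_data" and n :: nat
  assumes "extriangulated CC" and "krull_schmidt CC"
    and "enough_projectives CC" and "enough_injectives CC"
  shows "partial_order_on {T. tilting CC n T}
           {(T1, T2). tilting CC n T1 \<and> tilting CC n T2 \<and> T1 \<subseteq> perp CC T2}"
    (is "partial_order_on ?A ?le")
proof -
  interpret extriangulated_enough_projectives CC
    using assms(1,3) by unfold_locales
  have "?le \<subseteq> ?A \<times> ?A" by blast
  moreover have "refl_on ?A ?le" by (rule refl_onI) (auto simp: tilting_def)
  moreover have "trans ?le"
    by (rule transI) (use perp_subset_perp_of_tilting in blast)
  moreover have "antisym ?le"
    by (rule antisymI) (use tilting_antisym in blast)
  ultimately show ?thesis unfolding partial_order_on_def preorder_on_def by blast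
qed

end
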